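(* The following activation functions $\phi:\mathbb{R}\to\mathbb{R}$ satisfy Property 1, Property 2 and Property 3: the ReLU $\phi(z)=\max\{z,0\}$, the leaky ReLU $\phi(z)=\max\{z,0.01z\}$, the squared ReLU $\phi(z)=\max\{z,0\}^2$, and every non-linear, non-decreasing smooth function with bounded first derivative $\phi'$ that is symmetric (i.e. $\phi'(z)=\phi'(-z)$) and bounded second derivative, e.g. the sigmoid $\phi(z)=1/(1+e^{-z})$, $\tanh$, and $\phi(z)=\int_0^z e^{-t^2}\,dt$. Moreover, the linear function $\phi(z)=z$ does not satisfy Property 2, and the quadratic function $\phi(z)=z^2$ satisfies neither Property 1 nor Property 2.
   Context: Activation functions are continuous; if $\phi$ is not differentiable, $\phi'$ denotes the left derivative. Let $z\sim\mathcal{N}(0,1)$. Property 1: $0\le \phi'(z)\le L_1|z|^p$ for all $z$, for some constants $L_1>0$, $p\ge 0$. Property 2: for $\sigma>0$ let $\alpha_q(\sigma)=\mathbb{E}[\phi'(\sigma z)z^q]$ for $q\in\{0,1,2\}$, $\beta_q(\sigma)=\mathbb{E}[\phi'(\sigma z)^2 z^q]$ for $q\in\{0,2\}$, and $\rho(\sigma)=\min\{\beta_0(\sigma)-\alpha_0(\sigma)^2-\alpha_1(\sigma)^2,\ \beta_2(\sigma)-\alpha_1(\sigma)^2-\alpha_2(\sigma)^2,\ \alpha_0(\sigma)\alpha_2(\sigma)-\alpha_1(\sigma)^2\}$. Property 2 requires $\rho(\sigma)>0$ for all $\sigma>0$. Property 3: either (a) $|\phi''(z)|\le L_2$ for all $z$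 for some constant $L_2$, or (b) $\phi''(z)=0$ except at finitely many ($e$) points. *)

theory Defs
  imports "HOL-Probability.Probability"
begin

definition left_deriv :: "(real \<Rightarrow> real) \<Rightarrow> real \<Rightarrow> real" where
  "left_deriv f x = Lim (at_left 0) (\<lambda>h. (f (x + h) - f x) / h)"

definition gauss_exp :: "(real \<Rightarrow> real) \<Rightarrow> real" where
  "gauss_exp g = (LINT x|lborel. std_normal_density x * g x)"

text \<open>|z|^p with the usual convention |z|^0 = 1 (also at z = 0).\<close>
definition abs_pow :: "real \<Rightarrow> real \<Rightarrow> real" where
  "abs_pow z p = (if p = 0 then 1 else \<bar>z\<bar> powr p)"

definition property1 :: "(real \<Rightarrow> real) \<Rightarrow> bool" where
  "property1 \<phi> \<longleftrightarrow> (\<exists>L1 p. L1 > 0 \<and> p \<ge> 0 \<and>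
      (\<forall>z. 0 \<le> left_deriv \<phi> z \<and> left_deriv \<phi> z \<le> L1 * abs_pow z p))"

definition alpha :: "(real \<Rightarrow> real) \<Rightarrow> nat \<Rightarrow> real \<Rightarrow> real" where
  "alpha \<phi> q \<sigma> = gauss_exp (\<lambda>z. left_deriv \<phi> (\<sigma> * z) * z ^ q)"

definition beta :: "(real \<Rightarrow> real) \<Rightarrow> nat \<Rightarrow> real \<Rightarrow> real" where
  "beta \<phi> q \<sigma> = gauss_exp (\<lambda>z. (left_deriv \<phi> (\<sigma> * z))\<^sup>2 * z ^ q)"

definition rho :: "(real \<Rightarrow> real) \<Rightarrow> real \<Rightarrow> real" where
  "rho \<phi> \<sigma> = Min {beta \<phi> 0 \<sigma> - (alpha \<phi> 0 \<sigma>)\<^sup>2 - (alpha \<phi> 1 \<sigma>)\<^sup>2,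
                    beta \<phi> 2 \<sigma> - (alpha \<phi> 1 \<sigma>)\<^sup>2 - (alpha \<phi> 2 \<sigma>)\<^sup>2,
                    alpha \<phi> 0 \<sigma> * alpha \<phi> 2 \<sigma> - (alpha \<phi> 1 \<sigma>)\<^sup>2}"

definition property2 :: "(real \<Rightarrow> real) \<Rightarrow> bool" where
  "property2 \<phi> \<longleftrightarrow> (\<forall>\<sigma>>0. rho \<phi> \<sigma> > 0)"

definition property3 :: "(real \<Rightarrow> real) \<Rightarrow> bool" where
  "property3 \<phi> \<longleftrightarrow>
     (\<exists>L2. \<forall>z. \<bar>left_deriv (left_deriv \<phi>) z\<bar> \<le> L2)
     \<or> finite {z. left_deriv (left_deriv \<phi>) z \<noteq> 0}"

definition smooth_with :: "(nat \<Rightarrow> real \<Rightarrow> real) \<Rightarrow> (real \<Rightarrow> real) \<Rightarrow> bool" where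
  "smooth_with D f \<longleftrightarrow> D 0 = f \<and> (\<forall>n x. (D n has_real_derivative D (Suc n) x) (at x))"

definition relu :: "real \<Rightarrow> real" where "relu z = max z 0"
definition leaky_relu :: "real \<Rightarrow> real" where "leaky_relu z = max z (0.01 * z)"
definition squared_relu :: "real \<Rightarrow> real" where "squared_relu z = (max z 0)\<^sup>2"
definition sigmoid :: "real \<Rightarrow> real" where "sigmoid z = 1 / (1 + exp (- z))"
definition gauss_int :: "real \<Rightarrow> real" where
  "gauss_int z = (LBINT t=0..ereal z. exp (- t\<^sup>2))"

end

theory Submission
  imports Defs
begin

text \<open>
  For the ReLU, the leaky ReLU and the squared ReLU the derivative is linear on each half-line, so
  every \<open>\<alpha>\<^sub>q\<close> and \<open>\<beta>\<^sub>q\<close> is a combination of Gaussian moments and half-moments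
  \<open>E[z\<^sup>q; z > 0]\<close>, and \<open>\<rho>\<close> is computed in closed form. For a smooth activation with bounded,
  even, non-constant derivative \<open>f\<close>, put \<open>F(z) = f(\<sigma> z)\<close>. Symmetry gives \<open>\<alpha>\<^sub>1 = 0\<close>, and
  since \<open>E z\<^sup>2 = 1\<close> the three terms of \<open>\<rho>\<close> become \<open>E[(F - E F)\<^sup>2]\<close>,
  \<open>E[(F - E[F z\<^sup>2])\<^sup>2 z\<^sup>2]\<close> and \<open>E[F] E[F z\<^sup>2]\<close>: Gaussian expectations of continuous
  non-negative functions that do not vanish identically, hence positive. For \<open>z\<close> and \<open>z\<^sup>2\<close>
  the derivative is constant resp. odd, which makes the first resp. third term non-positive.
\<close>

lemma left_deriv_eqI:
  assumes "(f has_real_derivative D) (at x)"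
  shows "left_deriv f x = D"
proof -
  have "((\<lambda>h. (f (x + h) - f x) / h) \<longlongrightarrow> D) (at 0)"
    using assms by (simp add: DERIV_def)
  then have "((\<lambda>h. (f (x + h) - f x) / h) \<longlongrightarrow> D) (at_left 0)"
    by (rule filterlim_mono) (auto simp: at_le)
  then show ?thesis
    unfolding left_deriv_def by (intro tendsto_Lim) simp_all
qed

lemma left_deriv_eq:
  assumes "\<And>x. (f has_real_derivative f' x) (at x)"
  shows "left_deriv f = f'"
  using left_deriv_eqI[OF assms] by auto

lemma left_deriv_cong_left:
  assumes "d > 0" and "\<And>y. x - d < y \<Longrightarrow> y \<le> x \<Longrightarrow> f y = g y"
  shows "left_deriv f x = left_deriv g x"
proof -
  have "eventually (\<lambda>h. h \<in> {-d<..<0}) (at_left (0::real))"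
    using assms(1) by (intro eventually_at_left_real) auto
  then have "eventually (\<lambda>h. (f (x + h) - f x) / h = (g (x + h) - g x) / h) (at_left 0)"
    by (rule eventually_mono) (auto simp: assms(2))
  then have "((\<lambda>h. (f (x + h) - f x) / h) \<longlongrightarrow> L) (at_left 0)
         \<longleftrightarrow> ((\<lambda>h. (g (x + h) - g x) / h) \<longlongrightarrow> L) (at_left 0)" for L
    by (rule tendsto_cong)
  then show ?thesis
    unfolding left_deriv_def t2_space_class.Lim_def by presburger
qed

lemma left_deriv_piecewise:
  assumes "\<And>y. y > 0 \<Longrightarrow> f y = g y" and "\<And>y. y \<le> 0 \<Longrightarrow> f y = h y"
    and "\<And>x. (g has_real_derivative g' x) (at x)" and "\<And>x. (h has_real_derivative h' x) (at x)"
  shows "left_deriv f = (\<lambda>z. if z > 0 then g' z else h' z)"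
proof
  fix z :: real
  show "left_deriv f z = (if z > 0 then g' z else h' z)"
  proof (cases "z > 0")
    case True
    then have "left_deriv f z = left_deriv g z"
      using assms(1) by (intro left_deriv_cong_left[of z]) auto
    with True show ?thesis using left_deriv_eqI[OF assms(3)] by simp
  next
    case False
    then have "left_deriv f z = left_deriv h z"
      using assms(2) by (intro left_deriv_cong_left[of 1]) auto
    with False show ?thesis using left_deriv_eqI[OF assms(4)] by simp
  qed
qed

lemma property1_of_bounded_left_deriv:
  assumes "\<And>z. 0 \<le> left_deriv \<phi> z" and "\<And>z. left_deriv \<phi> z \<le> L"
  shows "property1 \<phi>"
proof -
  have "\<forall>z. 0 \<le> left_deriv \<phi> z \<and> left_deriv \<phi> z \<le> max L 1 * abs_pow z 0"
    using assms(1) order_trans[OF assms(2) max.cobounded1] by (simp add: abs_pow_def)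
  then show ?thesis
    unfolding property1_def by (rule_tac x = "max L 1" in exI, rule_tac x = 0 in exI) auto
qed

lemma rho_pos_iff:
  "rho \<phi> \<sigma> > 0 \<longleftrightarrow>
     beta \<phi> 0 \<sigma> - (alpha \<phi> 0 \<sigma>)\<^sup>2 - (alpha \<phi> 1 \<sigma>)\<^sup>2 > 0 \<and>
     beta \<phi> 2 \<sigma> - (alpha \<phi> 1 \<sigma>)\<^sup>2 - (alpha \<phi> 2 \<sigma>)\<^sup>2 > 0 \<and>
     alpha \<phi> 0 \<sigma> * alpha \<phi> 2 \<sigma> - (alpha \<phi> 1 \<sigma>)\<^sup>2 > 0"
  by (simp add: rho_def)

definition gauss_integrable :: "(real \<Rightarrow> real) \<Rightarrow> bool" where
  "gauss_integrable g \<longleftrightarrow> integrable lborel (\<lambda>x. std_normal_density x * g x)"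

lemma gauss_exp_reflect: "gauss_exp (\<lambda>z. g (- z)) = gauss_exp g"
  unfolding gauss_exp_def
  using lborel_integral_real_affine[of "-1" "\<lambda>x. std_normal_density x * g x" 0]
  by (simp add: std_normal_density_def)

lemma gauss_exp_odd:
  assumes "\<And>z. g (- z) = - g z"
  shows "gauss_exp g = 0"
proof -
  have "gauss_exp g = gauss_exp (\<lambda>z. - g z)"
    using gauss_exp_reflect[of g] by (simp add: assms)
  also have "\<dots> = - gauss_exp g"
    by (simp add: gauss_exp_def)
  finally show ?thesis by simp
qed

lemma gauss_exp_one [simp]: "gauss_exp (\<lambda>z. 1) = 1"
  by (simp add: gauss_exp_def)

lemma gauss_exp_id [simp]: "gauss_exp (\<lambda>z. z) = 0"
  by (rule gauss_exp_odd) simp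

lemma gauss_exp_square [simp]: "gauss_exp (\<lambda>z. z\<^sup>2) = 1"
  using integral_std_normal_moment_even[of 1] by (simp add: gauss_exp_def)

lemma gauss_integrable_power: "gauss_integrable (\<lambda>z. z ^ q)"
  unfolding gauss_integrable_def by (rule integrable_std_normal_moment)

lemma gauss_integrable_bounded_continuous:
  assumes "continuous_on UNIV h" and "\<And>x. \<bar>h x\<bar> \<le> C"
  shows "gauss_integrable (\<lambda>z. h z * z ^ q)"
  unfolding gauss_integrable_def
proof (rule Bochner_Integration.integrable_bound)
  show "integrable lborel (\<lambda>x. C * (std_normal_density x * \<bar>x\<bar> ^ q))"
    by (intro integrable_mult_right integrable_std_normal_moment_abs)
  have "h \<in> borel_measurable borel"
    using assms(1) by (rule borel_measurable_continuous_onI)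
  then show "(\<lambda>x. std_normal_density x * (h x * x ^ q)) \<in> borel_measurable lborel"
    by measurable
  show "AE x in lborel. norm (std_normal_density x * (h x * x ^ q))
                        \<le> norm (C * (std_normal_density x * \<bar>x\<bar> ^ q))"
  proof (rule AE_I2)
    fix x
    have "\<bar>h x\<bar> * (std_normal_density x * \<bar>x\<bar> ^ q) \<le> C * (std_normal_density x * \<bar>x\<bar> ^ q)"
      by (intro mult_right_mono assms(2)) auto
    then show "norm (std_normal_density x * (h x * x ^ q))
               \<le> norm (C * (std_normal_density x * \<bar>x\<bar> ^ q))"
      using abs_ge_zero[of "h x"] assms(2)[of x]
      by (simp add: abs_mult power_abs algebra_simps)
  qed
qed

lemma gauss_exp_pos:
  assumes cont: "continuous_on UNIV h" and nonneg: "\<And>x. 0 \<le> h x" and pos: "h z0 > 0"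
    and int: "gauss_integrable h"
  shows "gauss_exp h > 0"
proof -
  have "open {x. 0 < h x}"
    using open_Collect_less[of "\<lambda>_. 0" h] cont by simp
  then obtain e where "e > 0" and ball: "ball z0 e \<subseteq> {x. 0 < h x}"
    using pos by (auto elim!: openE)
  let ?I = "{z0 - e/2 .. z0 + e/2}"
  have I_pos: "h x > 0" if "x \<in> ?I" for x
    using that \<open>e > 0\<close> ball by (force simp: dist_real_def)
  have "gauss_exp h \<noteq> 0"
  proof
    assume "gauss_exp h = 0"
    then have "AE x in lborel. std_normal_density x * h x = 0"
      using int nonneg
      by (simp add: gauss_exp_def gauss_integrable_def integral_nonneg_eq_0_iff_AE)
    then have "AE x in lborel. x \<notin> ?I"
    proof (rule eventually_mono)
      fix x
      assume "std_normal_density x * h x = 0"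
      then have "h x = 0"
        using normal_density_pos[of 1 0 x] by simp
      then show "x \<notin> ?I"
        using I_pos by force
    qed
    then have "emeasure lborel ?I = 0"
      by (subst (asm) AE_iff_measurable[of ?I]) auto
    with \<open>e > 0\<close> show False by simp
  qed
  moreover have "gauss_exp h \<ge> 0"
    unfolding gauss_exp_def using nonneg by (intro Bochner_Integration.integral_nonneg) auto
  ultimately show ?thesis by simp
qed

lemma gauss_exp_moment_pos:
  assumes "continuous_on UNIV G" and "\<And>z. 0 \<le> G z" and "\<And>z. G z \<le> C"
    and "z0 \<noteq> 0" and "G z0 > 0" and "even q"
  shows "gauss_exp (\<lambda>z. G z * z ^ q) > 0"
proof (rule gauss_exp_pos)
  show "continuous_on UNIV (\<lambda>z. G z * z ^ q)"
    using assms(1) by (intro continuous_intros)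
  show "0 \<le> G z * z ^ q" for z
    using assms(2,6) by (simp add: zero_le_even_power)
  show "G z0 * z0 ^ q > 0"
    using assms(4-6) by (simp add: zero_less_power_eq)
  show "gauss_integrable (\<lambda>z. G z * z ^ q)"
    using assms(1-3) by (intro gauss_integrable_bounded_continuous[where C = C]) auto
qed

lemma gauss_exp_square_deviation:
  assumes "gauss_integrable (\<lambda>z. F z * z ^ q)" and "gauss_integrable (\<lambda>z. (F z)\<^sup>2 * z ^ q)"
  shows "gauss_exp (\<lambda>z. (F z - c)\<^sup>2 * z ^ q)
    = gauss_exp (\<lambda>z. (F z)\<^sup>2 * z ^ q) - 2 * c * gauss_exp (\<lambda>z. F z * z ^ q)
      + c\<^sup>2 * gauss_exp (\<lambda>z. z ^ q)"
proof -
  have "gauss_exp (\<lambda>z. (F z - c)\<^sup>2 * z ^ q)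
    = (\<integral>x. std_normal_density x * ((F x)\<^sup>2 * x ^ q) - 2 * c * (std_normal_density x * (F x * x ^ q))
        + c\<^sup>2 * (std_normal_density x * x ^ q) \<partial>lborel)"
    unfolding gauss_exp_def
    by (rule Bochner_Integration.integral_cong) (auto simp: power2_eq_square algebra_simps)
  also have "\<dots> = gauss_exp (\<lambda>z. (F z)\<^sup>2 * z ^ q) - 2 * c * gauss_exp (\<lambda>z. F z * z ^ q)
      + c\<^sup>2 * gauss_exp (\<lambda>z. z ^ q)"
    using assms gauss_integrable_power[of q] by (simp add: gauss_exp_def gauss_integrable_def)
  finally show ?thesis .
qed

definition half_moment :: "nat \<Rightarrow> real" where
  "half_moment q = gauss_exp (\<lambda>z. if z > 0 then z ^ q else 0)"

lemma half_moment_eq: "half_moment q = gauss_exp (\<lambda>z. \<bar>z\<bar> ^ q) / 2"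
proof -
  let ?pos = "\<lambda>z::real. if z > 0 then \<bar>z\<bar> ^ q else 0"
  have int: "gauss_integrable ?pos" "gauss_integrable (\<lambda>z. ?pos (- z))"
    unfolding gauss_integrable_def
    by (rule Bochner_Integration.integrable_bound[OF integrable_std_normal_moment_abs[of q]];
        auto simp: abs_mult)+
  have "gauss_exp (\<lambda>z. \<bar>z\<bar> ^ q) = gauss_exp (\<lambda>z. ?pos z + ?pos (- z))"
    unfolding gauss_exp_def
    by (rule integral_cong_AE) (auto intro!: eventually_mono[OF AE_lborel_singleton[of 0]])
  also have "\<dots> = gauss_exp ?pos + gauss_exp (\<lambda>z. ?pos (- z))"
    using int by (simp add: gauss_exp_def gauss_integrable_def distrib_left)
  also have "\<dots> = 2 * gauss_exp ?pos"
    by (simp only: gauss_exp_reflect[of ?pos])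
  also have "gauss_exp ?pos = half_moment q"
    unfolding half_moment_def by (simp cong: if_cong)
  finally show ?thesis by simp
qed

lemma half_moment_values:
  "half_moment 0 = 1/2" "half_moment 1 = sqrt (2/pi) / 2" "half_moment 2 = 1/2"
  "half_moment 3 = sqrt (2/pi)" "half_moment 4 = 3/2"
  using integral_std_normal_moment_abs_odd[of 0] integral_std_normal_moment_abs_odd[of 1]
    integral_std_normal_moment_even[of 1] integral_std_normal_moment_even[of 2]
  by (simp_all add: half_moment_eq gauss_exp_def fact_numeral numeral_3_eq_3)

lemma gauss_exp_step:
  assumes "\<sigma> > 0"
  shows "gauss_exp (\<lambda>z. (if \<sigma> * z > 0 then a else b) * z ^ q)
    = b * gauss_exp (\<lambda>z. z ^ q) + (a - b) * half_moment q"
proof -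
  have int: "gauss_integrable (\<lambda>z. if z > 0 then z ^ q else 0)"
    unfolding gauss_integrable_def
    by (rule Bochner_Integration.integrable_bound[OF integrable_std_normal_moment_abs[of q]])
       (auto simp: abs_mult power_abs)
  have "gauss_exp (\<lambda>z. (if \<sigma> * z > 0 then a else b) * z ^ q)
    = gauss_exp (\<lambda>z. b * z ^ q + (a - b) * (if z > 0 then z ^ q else 0))"
    unfolding gauss_exp_def using assms
    by (intro Bochner_Integration.integral_cong) (auto simp: zero_less_mult_iff algebra_simps)
  also have "\<dots> = b * gauss_exp (\<lambda>z. z ^ q) + (a - b) * half_moment q"
    using int gauss_integrable_power[of q]
    by (simp add: half_moment_def gauss_exp_def gauss_integrable_def algebra_simps)
  finally show ?thesis .
qed

lemma left_deriv_max_scaled: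
  assumes "c \<le> 1"
  shows "left_deriv (\<lambda>z. max z (c * z)) = (\<lambda>z. if z > 0 then 1 else c)"
proof (rule left_deriv_piecewise[where g = "\<lambda>z. z" and h = "\<lambda>z. c * z"])
  show "max y (c * y) = y" if "y > 0" for y
    using assms that mult_right_mono[OF assms, of y] by simp
  show "max y (c * y) = c * y" if "y \<le> 0" for y
    using assms that mult_right_mono_neg[OF assms, of y] by simp
qed (auto intro!: derivative_eq_intros)

lemma max_scaled_properties:
  assumes "0 \<le> c" and "c < 1"
  shows "property1 (\<lambda>z. max z (c * z)) \<and> property2 (\<lambda>z. max z (c * z))
    \<and> property3 (\<lambda>z. max z (c * z))"
proof (intro conjI)
  let ?\<phi> = "\<lambda>z. max z (c * z)"
  have deriv: "left_deriv ?\<phi> = (\<lambda>z. if z > 0 then 1 else c)"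
    using assms by (intro left_deriv_max_scaled) simp
  show "property1 ?\<phi>"
    using assms by (intro property1_of_bounded_left_deriv[where L = 1]) (simp_all add: deriv)
  have "left_deriv (left_deriv ?\<phi>) = (\<lambda>z. 0)"
    unfolding deriv
    by (rule left_deriv_piecewise[where g = "\<lambda>_. 1" and h = "\<lambda>_. c", THEN trans])
       (auto intro!: derivative_eq_intros)
  then show "property3 ?\<phi>"
    unfolding property3_def by simp
  show "property2 ?\<phi>"
    unfolding property2_def
  proof (intro allI impI)
    fix \<sigma> :: real
    assume "\<sigma> > 0"
    define s where "s = sqrt (2 / pi)"
    have s2: "s\<^sup>2 = 2 / pi"
      by (simp add: s_def)
    have alpha_q: "alpha ?\<phi> q \<sigma> = c * gauss_exp (\<lambda>z. z ^ q) + (1 - c) * half_moment q" for q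
      unfolding alpha_def deriv using gauss_exp_step[OF \<open>\<sigma> > 0\<close>, of 1 c q] by simp
    have alpha: "alpha ?\<phi> 0 \<sigma> = (1 + c) / 2" "alpha ?\<phi> 1 \<sigma> = (1 - c) * s / 2"
        "alpha ?\<phi> 2 \<sigma> = (1 + c) / 2"
      unfolding alpha_q half_moment_values by (simp_all add: s_def field_simps)
    have "(if \<sigma> * z > 0 then 1 else c)\<^sup>2 = (if \<sigma> * z > 0 then 1 else c\<^sup>2)" for z
      by simp
    then have beta_q: "beta ?\<phi> q \<sigma> = c\<^sup>2 * gauss_exp (\<lambda>z. z ^ q) + (1 - c\<^sup>2) * half_moment q" for q
      unfolding beta_def deriv using gauss_exp_step[OF \<open>\<sigma> > 0\<close>, of 1 "c\<^sup>2" q] by simp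
    have beta: "beta ?\<phi> 0 \<sigma> = (1 + c\<^sup>2) / 2" "beta ?\<phi> 2 \<sigma> = (1 + c\<^sup>2) / 2"
      unfolding beta_q half_moment_values by (simp_all add: field_simps)
    have "(1 - c)\<^sup>2 * s\<^sup>2 < (1 - c)\<^sup>2"
      using assms pi_gt3 by (simp add: s2 field_simps)
    moreover have "(1 - c)\<^sup>2 \<le> (1 + c)\<^sup>2"
      using assms by (simp add: power2_eq_square algebra_simps)
    ultimately show "rho ?\<phi> \<sigma> > 0"
      unfolding rho_pos_iff alpha beta by (simp add: power2_eq_square field_simps)
  qed
qed

lemma squared_relu_properties:
  "property1 squared_relu \<and> property2 squared_relu \<and> property3 squared_relu"
proof (intro conjI)
  have deriv: "left_deriv squared_relu = (\<lambda>z. if z > 0 then 2 * z else 0)"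
    by (rule left_deriv_piecewise[where g = "\<lambda>z. z\<^sup>2" and h = "\<lambda>_. 0"])
       (auto simp: squared_relu_def intro!: derivative_eq_intros)
  have deriv2: "left_deriv (left_deriv squared_relu) = (\<lambda>z. if z > 0 then 2 else 0)"
    unfolding deriv
    by (rule left_deriv_piecewise[where g = "\<lambda>z. 2 * z" and h = "\<lambda>_. 0"])
       (auto intro!: derivative_eq_intros)
  show "property1 squared_relu"
    unfolding property1_def deriv
    by (rule exI[of _ 2], rule exI[of _ 1]) (auto simp: abs_pow_def)
  show "property3 squared_relu"
    unfolding property3_def deriv2 by (rule disjI1, rule exI[of _ 2]) auto
  show "property2 squared_relu"
    unfolding property2_def
  proof (intro allI impI)
    fix \<sigma> :: real
    assume "\<sigma> > 0"
    define s where "s = sqrt (2 / pi)"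
    have s2: "s\<^sup>2 = 2 / pi"
      by (simp add: s_def)
    have integrand_alpha: "(if \<sigma> * z > 0 then 2 * (\<sigma> * z) else 0) * z ^ q
        = (if \<sigma> * z > 0 then 2 * \<sigma> else 0) * z ^ Suc q" for z :: real and q
      by simp
    have alpha_q: "alpha squared_relu q \<sigma> = 2 * \<sigma> * half_moment (Suc q)" for q
      unfolding alpha_def deriv integrand_alpha
      using gauss_exp_step[OF \<open>\<sigma> > 0\<close>, of "2 * \<sigma>" 0 "Suc q"] by simp
    have integrand_beta: "(if \<sigma> * z > 0 then 2 * (\<sigma> * z) else 0)\<^sup>2 * z ^ q
        = (if \<sigma> * z > 0 then 4 * \<sigma>\<^sup>2 else 0) * z ^ Suc (Suc q)" for z :: real and q
      by (simp add: power2_eq_square)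
    have beta_q: "beta squared_relu q \<sigma> = 4 * \<sigma>\<^sup>2 * half_moment (Suc (Suc q))" for q
      unfolding beta_def deriv integrand_beta
      using gauss_exp_step[OF \<open>\<sigma> > 0\<close>, of "4 * \<sigma>\<^sup>2" 0 "Suc (Suc q)"] by simp
    have alpha: "alpha squared_relu 0 \<sigma> = \<sigma> * s" "alpha squared_relu 1 \<sigma> = \<sigma>"
        "alpha squared_relu 2 \<sigma> = 2 * \<sigma> * s"
      unfolding alpha_q using half_moment_values by (simp_all add: s_def numeral_eq_Suc)
    have beta: "beta squared_relu 0 \<sigma> = 2 * \<sigma>\<^sup>2" "beta squared_relu 2 \<sigma> = 6 * \<sigma>\<^sup>2"
      unfolding beta_q using half_moment_values by (simp_all add: numeral_eq_Suc)
    have "2 < pi" "pi < 4"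
      using pi_gt3 pi_less_4 by simp_all
    then have "0 < 1 - s\<^sup>2" "0 < 5 - 4 * s\<^sup>2" "0 < 2 * s\<^sup>2 - 1"
      by (simp_all add: s2 field_simps)
    with \<open>\<sigma> > 0\<close> show "rho squared_relu \<sigma> > 0"
      unfolding rho_pos_iff alpha beta by (simp add: power2_eq_square algebra_simps)
  qed
qed

lemma not_property2_id: "\<not> property2 (\<lambda>z. z)"
proof -
  have "left_deriv (\<lambda>z. z) = (\<lambda>z. 1)"
    by (rule left_deriv_eq) (auto intro!: derivative_eq_intros)
  then have "beta (\<lambda>z. z) 0 1 - (alpha (\<lambda>z. z) 0 1)\<^sup>2 - (alpha (\<lambda>z. z) 1 1)\<^sup>2 = 0"
    by (simp add: alpha_def beta_def)
  then show ?thesis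
    unfolding property2_def rho_pos_iff by (metis less_irrefl zero_less_one)
qed

lemma left_deriv_square: "left_deriv (\<lambda>z. z\<^sup>2) = (\<lambda>z. 2 * z)"
  by (rule left_deriv_eq) (auto intro!: derivative_eq_intros)

lemma not_property1_square: "\<not> property1 (\<lambda>z. z\<^sup>2)"
  unfolding property1_def left_deriv_square by (auto intro!: exI[of _ "-1"])

lemma not_property2_square: "\<not> property2 (\<lambda>z. z\<^sup>2)"
proof -
  have alpha: "alpha (\<lambda>z. z\<^sup>2) q 1 = 2 * gauss_exp (\<lambda>z. z ^ (q + 1))" for q
    unfolding alpha_def gauss_exp_def left_deriv_square
    using integral_mult_right_zero[of lborel 2 "\<lambda>x. std_normal_density x * x ^ (q + 1)"]
    by (simp add: algebra_simps)
  have "alpha (\<lambda>z. z\<^sup>2) 0 1 = 0" "alpha (\<lambda>z. z\<^sup>2) 1 1 = 2"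
    unfolding alpha one_add_one by simp_all
  then have "alpha (\<lambda>z. z\<^sup>2) 0 1 * alpha (\<lambda>z. z\<^sup>2) 2 1 - (alpha (\<lambda>z. z\<^sup>2) 1 1)\<^sup>2 < 0"
    by simp
  then show ?thesis
    unfolding property2_def rho_pos_iff by (metis not_less_iff_gr_or_eq zero_less_one)
qed

lemma continuous_nonconstant_avoids_value:
  fixes F :: "real \<Rightarrow> real"
  assumes "continuous_on UNIV F" and "F a \<noteq> F b"
  obtains z where "z \<noteq> 0" and "F z \<noteq> v"
proof (rule ccontr)
  assume "\<not> thesis"
  with that have off_zero: "F z = v" if "z \<noteq> 0" for z
    using that by blast
  have "(F \<longlongrightarrow> F 0) (at 0)"
    using assms(1) by (simp add: continuous_on_def)
  moreover have "(F \<longlongrightarrow> v) (at 0)"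
    by (rule tendsto_eventually) (auto simp: eventually_at_filter off_zero)
  ultimately have "F 0 = v"
    using tendsto_unique by (metis trivial_limit_at)
  with off_zero assms(2) show False
    by metis
qed

lemma rho_pos_of_even_left_deriv:
  assumes deriv: "left_deriv \<phi> = f" and cont: "continuous_on UNIV f"
    and nonneg: "\<And>x. 0 \<le> f x" and bdd: "\<And>x. f x \<le> B"
    and even: "\<And>x. f (- x) = f x" and nonconst: "f a \<noteq> f b" and "\<sigma> > 0"
  shows "rho \<phi> \<sigma> > 0"
proof -
  define F where "F z = f (\<sigma> * z)" for z
  have F_cont: "continuous_on UNIV F"
    unfolding F_def by (intro continuous_on_compose2[OF cont] continuous_intros) auto
  have F_nonneg: "0 \<le> F z" and F_bdd: "\<bar>F z\<bar> \<le> B" for z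
    using nonneg[of "\<sigma> * z"] bdd[of "\<sigma> * z"] by (simp_all add: F_def)
  have F_nonconst: "F (a / \<sigma>) \<noteq> F (b / \<sigma>)"
    using nonconst \<open>\<sigma> > 0\<close> by (simp add: F_def)
  let ?A = "\<lambda>q. gauss_exp (\<lambda>z. F z * z ^ q)"
  let ?B = "\<lambda>q. gauss_exp (\<lambda>z. (F z)\<^sup>2 * z ^ q)"
  have alpha: "alpha \<phi> q \<sigma> = ?A q" and beta: "beta \<phi> q \<sigma> = ?B q" for q
    by (simp_all add: alpha_def beta_def deriv F_def)
  have "?A 1 = 0"
    by (rule gauss_exp_odd) (simp add: F_def even[of "\<sigma> * z" for z, symmetric])
  have A_pos: "?A q > 0" if "even q" for q
  proof -
    obtain z where "z \<noteq> 0" "F z \<noteq> 0"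
      using continuous_nonconstant_avoids_value[OF F_cont F_nonconst] .
    then have "F z > 0"
      using F_nonneg[of z] by simp
    with \<open>z \<noteq> 0\<close> show ?thesis
      using F_cont F_nonneg F_bdd \<open>even q\<close>
      by (intro gauss_exp_moment_pos[where C = B]) (auto simp: abs_le_iff)
  qed
  have deviation_pos: "?B q - 2 * c * ?A q + c\<^sup>2 * gauss_exp (\<lambda>z. z ^ q) > 0" if "even q" for q c
  proof -
    obtain z where "z \<noteq> 0" "F z \<noteq> c"
      using continuous_nonconstant_avoids_value[OF F_cont F_nonconst] .
    have "(F x - c)\<^sup>2 \<le> (B + \<bar>c\<bar>)\<^sup>2" for x
      using F_bdd[of x] by (auto simp: abs_le_square_iff[symmetric])
    then have "gauss_exp (\<lambda>x. (F x - c)\<^sup>2 * x ^ q) > 0"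
      using F_cont \<open>z \<noteq> 0\<close> \<open>F z \<noteq> c\<close> \<open>even q\<close>
      by (intro gauss_exp_moment_pos[where C = "(B + \<bar>c\<bar>)\<^sup>2"] continuous_intros) auto
    moreover have "gauss_integrable (\<lambda>x. F x * x ^ q)"
      using F_cont F_bdd by (rule gauss_integrable_bounded_continuous)
    moreover have "gauss_integrable (\<lambda>x. (F x)\<^sup>2 * x ^ q)"
      using continuous_on_power[OF F_cont] power_mono[OF F_bdd abs_ge_zero, of _ 2]
      by (intro gauss_integrable_bounded_continuous[where C = "B\<^sup>2"]) auto
    ultimately show ?thesis
      by (simp add: gauss_exp_square_deviation)
  qed
  show ?thesis
    unfolding rho_pos_iff alpha beta \<open>?A 1 = 0\<close>
    using deviation_pos[of 0 "?A 0"] deviation_pos[of 2 "?A 2", unfolded gauss_exp_square]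
      A_pos[of 0] A_pos[of 2]
    by (simp add: power2_eq_square)
qed

lemma properties_of_even_derivative:
  assumes d1: "\<And>x. (\<phi> has_real_derivative f x) (at x)"
    and d2: "\<And>x. (f has_real_derivative g x) (at x)"
    and nonneg: "\<And>x. 0 \<le> f x" and f_bdd: "\<And>x. f x \<le> B" and g_bdd: "\<And>x. \<bar>g x\<bar> \<le> C"
    and even: "\<And>x. f (- x) = f x" and nonconst: "f a \<noteq> f b"
  shows "property1 \<phi> \<and> property2 \<phi> \<and> property3 \<phi>"
proof (intro conjI)
  have deriv: "left_deriv \<phi> = f"
    using d1 by (rule left_deriv_eq)
  show "property1 \<phi>"
    using nonneg f_bdd by (intro property1_of_bounded_left_deriv) (simp_all add: deriv)
  show "property3 \<phi>"
    unfolding property3_def deriv left_deriv_eq[OF d2] using g_bdd by blast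
  have "continuous_on UNIV f"
    using d2 by (intro continuous_at_imp_continuous_on ballI DERIV_isCont) blast
  then show "property2 \<phi>"
    unfolding property2_def
    using deriv nonneg f_bdd even nonconst by (blast intro: rho_pos_of_even_left_deriv)
qed

lemma affine_if_constant_derivative:
  assumes "\<And>x. (\<phi> has_real_derivative c) (at x)"
  shows "\<phi> z = c * z + \<phi> 0"
proof -
  have "((\<lambda>z. \<phi> z - c * z) has_real_derivative 0) (at x)" for x
    using DERIV_diff[OF assms DERIV_cmult[OF DERIV_ident, of c]] by simp
  then show ?thesis
    using DERIV_isconst_all[of "\<lambda>z. \<phi> z - c * z" z 0] by simp
qed

lemma smooth_activation_properties:
  assumes smooth: "smooth_with D \<phi>" and nonlinear: "\<not> (\<exists>a b. \<forall>z. \<phi> z = a * z + b)"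
    and "mono \<phi>" and "\<And>z. \<bar>D 1 z\<bar> \<le> B" and "\<And>z. D 1 (- z) = D 1 z"
    and "\<And>z. \<bar>D 2 z\<bar> \<le> C"
  shows "property1 \<phi> \<and> property2 \<phi> \<and> property3 \<phi>"
proof -
  have d1: "(\<phi> has_real_derivative D 1 x) (at x)" for x
    using smooth unfolding smooth_with_def by (metis One_nat_def)
  have d2: "(D 1 has_real_derivative D 2 x) (at x)" for x
    using smooth unfolding smooth_with_def by (metis Suc_1)
  have "\<exists>a b. D 1 a \<noteq> D 1 b"
  proof (rule ccontr)
    assume "\<not> ?thesis"
    then have "(\<phi> has_real_derivative D 1 0) (at x)" for x
      using d1[of x] by metis
    then have "\<phi> z = D 1 0 * z + \<phi> 0" for z
      by (rule affine_if_constant_derivative)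
    with nonlinear show False
      by blast
  qed
  then obtain a b where "D 1 a \<noteq> D 1 b"
    by blast
  show ?thesis
  proof (rule properties_of_even_derivative[OF d1 d2])
    show "0 \<le> D 1 x" for x
      by (rule mono_on_imp_deriv_nonneg[of UNIV, OF _ d1])
         (use \<open>mono \<phi>\<close> in \<open>auto simp: mono_on_def mono_def\<close>)
    show "D 1 x \<le> B" for x
      using assms(4) by (rule abs_le_D1)
    show "\<bar>D 2 x\<bar> \<le> C" and "D 1 (- x) = D 1 x" for x
      by (fact assms(6), fact assms(5))
    show "D 1 a \<noteq> D 1 b"
      by fact
  qed
qed

lemma sigmoid_has_derivative:
  "(sigmoid has_real_derivative sigmoid x * (1 - sigmoid x)) (at x)"
proof -
  have "1 + exp (- x) \<noteq> 0"
    using exp_gt_zero[of "- x"] by linarith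
  then show ?thesis
    unfolding sigmoid_def
    by (auto intro!: derivative_eq_intros simp: power2_eq_square field_simps)
qed

lemma sigmoid_minus: "sigmoid (- x) = 1 - sigmoid x"
proof -
  have "1 + exp x \<noteq> 0" "1 + exp (- x) \<noteq> 0"
    using exp_gt_zero[of x] exp_gt_zero[of "- x"] by linarith+
  then show ?thesis
    unfolding sigmoid_def by (simp add: exp_minus field_simps)
qed

lemma sigmoid_bounds: "0 < sigmoid x" "sigmoid x < 1"
  unfolding sigmoid_def by (auto simp: add_pos_pos divide_less_eq)

lemma sigmoid_properties: "property1 sigmoid \<and> property2 sigmoid \<and> property3 sigmoid"
proof (rule properties_of_even_derivative)
  let ?f = "\<lambda>x. sigmoid x * (1 - sigmoid x)"
  show "(sigmoid has_real_derivative ?f x) (at x)" for x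
    by (rule sigmoid_has_derivative)
  show "(?f has_real_derivative ?f x * (1 - 2 * sigmoid x)) (at x)" for x
    by (rule DERIV_cong, rule DERIV_mult[OF sigmoid_has_derivative
          DERIV_diff[OF DERIV_const sigmoid_has_derivative]]) (simp add: algebra_simps)
  show "0 \<le> ?f x" and "?f x \<le> 1" and "\<bar>?f x * (1 - 2 * sigmoid x)\<bar> \<le> 1" for x
    using sigmoid_bounds[of x]
    by (simp_all add: abs_mult abs_le_iff mult_le_one)
  show "?f (- x) = ?f x" for x
    by (simp add: sigmoid_minus)
  have "sigmoid 0 = 1 / 2" "sigmoid 1 \<noteq> 1 / 2"
    unfolding sigmoid_def by (simp_all add: field_simps)
  moreover have "?f 1 - ?f 0 = - (sigmoid 1 - sigmoid 0)\<^sup>2" if "sigmoid 0 = 1 / 2"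
    using that by (simp add: power2_eq_square algebra_simps)
  ultimately show "?f 0 \<noteq> ?f 1"
    by auto
qed

lemma tanh_properties: "property1 tanh \<and> property2 tanh \<and> property3 tanh"
proof (rule properties_of_even_derivative)
  let ?f = "\<lambda>x::real. 1 - (tanh x)\<^sup>2"
  show "(tanh has_real_derivative ?f x) (at x)" for x
    by (auto intro!: derivative_eq_intros)
  show "(?f has_real_derivative - 2 * tanh x * ?f x) (at x)" for x
    by (auto intro!: derivative_eq_intros)
  show "0 \<le> ?f x" and "?f x \<le> 1" and "\<bar>- 2 * tanh x * ?f x\<bar> \<le> 2" for x
    using tanh_real_bounds[of x] abs_square_le_1[of "tanh x"]
    by (auto simp: abs_mult abs_le_iff intro: mult_le_one)
  show "?f (- x) = ?f x" for x
    by simp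
  show "?f 0 \<noteq> ?f 1"
    by simp
qed

lemma gauss_int_has_derivative: "(gauss_int has_real_derivative exp (- x\<^sup>2)) (at x)"
proof -
  let ?I = "{- \<bar>x\<bar> - 1 .. \<bar>x\<bar> + 1}"
  have "((\<lambda>u. LBINT t=ereal 0..ereal u. exp (- t\<^sup>2)) has_vector_derivative exp (- x\<^sup>2))
      (at x within ?I)"
    by (rule interval_integral_FTC2[OF _ _ continuous_on_exp[OF continuous_on_minus[OF
          continuous_on_power[OF continuous_on_id]]]]) auto
  moreover have "at x within ?I = at x"
    by (rule at_within_interior) auto
  ultimately show ?thesis
    unfolding gauss_int_def
    by (simp add: has_real_derivative_iff_has_vector_derivative zero_ereal_def)
qed

lemma abs_le_exp_square: "\<bar>x\<bar> \<le> exp (x\<^sup>2 :: real)"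
proof -
  have "\<bar>x\<bar> \<le> 1 + x\<^sup>2"
    using zero_le_power2[of "\<bar>x\<bar> - 1"] by (simp add: power2_eq_square algebra_simps)
  also have "\<dots> \<le> exp (x\<^sup>2)"
    by (rule exp_ge_add_one_self)
  finally show ?thesis .
qed

lemma gauss_int_properties: "property1 gauss_int \<and> property2 gauss_int \<and> property3 gauss_int"
proof (rule properties_of_even_derivative)
  show "(gauss_int has_real_derivative exp (- x\<^sup>2)) (at x)" for x
    by (rule gauss_int_has_derivative)
  show "((\<lambda>x. exp (- x\<^sup>2)) has_real_derivative - 2 * x * exp (- x\<^sup>2)) (at x)" for x :: real
    by (auto intro!: derivative_eq_intros)
  show "\<bar>- 2 * x * exp (- x\<^sup>2)\<bar> \<le> 2" for x :: real
    using mult_right_mono[OF abs_le_exp_square[of x], of "exp (- x\<^sup>2)"]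
    by (simp add: abs_mult exp_minus field_simps)
  show "0 \<le> exp (- x\<^sup>2)" and "exp (- x\<^sup>2) \<le> 1" and "exp (- (- x)\<^sup>2) = exp (- x\<^sup>2)" for x :: real
    by simp_all
  show "exp (- 0\<^sup>2) \<noteq> exp (- (1::real)\<^sup>2)"
    by simp
qed

theorem mainTheorem1:
  shows "(property1 relu \<and> property2 relu \<and> property3 relu)
    \<and> (property1 leaky_relu \<and> property2 leaky_relu \<and> property3 leaky_relu)
    \<and> (property1 squared_relu \<and> property2 squared_relu \<and> property3 squared_relu)
    \<and> (\<forall>\<phi> D. smooth_with D \<phi>
          \<and> \<not> (\<exists>a b. \<forall>z. \<phi> z = a * z + b)
          \<and> mono \<phi>
          \<and> (\<exists>B. \<forall>z. \<bar>D 1 z\<bar> \<le> B)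
          \<and> (\<forall>z. D 1 z = D 1 (- z))
          \<and> (\<exists>B. \<forall>z. \<bar>D 2 z\<bar> \<le> B)
        \<longrightarrow> property1 \<phi> \<and> property2 \<phi> \<and> property3 \<phi>)
    \<and> (property1 sigmoid \<and> property2 sigmoid \<and> property3 sigmoid)
    \<and> (property1 tanh \<and> property2 tanh \<and> property3 tanh)
    \<and> (property1 gauss_int \<and> property2 gauss_int \<and> property3 gauss_int)
    \<and> \<not> property2 (\<lambda>z::real. z)
    \<and> \<not> property1 (\<lambda>z::real. z\<^sup>2) \<and> \<not> property2 (\<lambda>z::real. z\<^sup>2)"
proof -
  have "relu = (\<lambda>z. max z (0 * z))" "leaky_relu = (\<lambda>z. max z (1 / 100 * z))"
    by (simp_all add: relu_def leaky_relu_def fun_eq_iff)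
  then have piecewise_linear:
      "property1 relu \<and> property2 relu \<and> property3 relu"
      "property1 leaky_relu \<and> property2 leaky_relu \<and> property3 leaky_relu"
    using max_scaled_properties[of 0] max_scaled_properties[of "1 / 100"] by simp_all
  have smooth: "property1 \<phi> \<and> property2 \<phi> \<and> property3 \<phi>"
    if "smooth_with D \<phi>" "\<not> (\<exists>a b. \<forall>z. \<phi> z = a * z + b)" "mono \<phi>"
      "\<forall>z. \<bar>D 1 z\<bar> \<le> B" "\<forall>z. D 1 z = D 1 (- z)" "\<forall>z. \<bar>D 2 z\<bar> \<le> C" for \<phi> D B C
    using that(1-3)
    by (rule smooth_activation_properties[where B = B and C = C]) (use that(4-6) in auto)
  show ?thesis
    using piecewise_linear squared_relu_properties smooth sigmoid_properties tanh_properties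
      gauss_int_properties not_property2_id not_property1_square not_property2_square
    by blast
qed

end
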